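(* For no traffic pattern in a multicast switch does the enhanced conflict graph contain an induced subgraph isomorphic to the Grötzsch graph.
   Context: A flow is $(i,J)$ with input $i$ and nonempty fanout set $J$ of outputs; a traffic pattern is a finite set of flows; subflows are $(i,J,j)$ with $j\in J$. Enhanced conflict graph: one vertex per subflow; distinct subflows $(i,J,j),(i',J',j')$ adjacent iff $j=j'$, or $i=i'$ and $J\ne J'$. The Grötzsch graph is the 11-vertex triangle-free graph with chromatic number 4 obtained by applying the Mycielski construction to the 5-cycle. *)

theory Defs
  imports Main
begin

text \<open>A flow is a pair (i, J): an input i and a nonempty (finite) fanout set J of outputs.
A traffic pattern is a finite set of flows.\<close>

definition is_flow :: "'i \<times> 'o set \<Rightarrow> bool" where
  "is_flow f \<longleftrightarrow> snd f \<noteq> {} \<and> finite (snd f)"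

definition traffic_pattern :: "('i \<times> 'o set) set \<Rightarrow> bool" where
  "traffic_pattern T \<longleftrightarrow> finite T \<and> (\<forall>f\<in>T. is_flow f)"

text \<open>Subflows (i, J, j) with (i, J) a flow of T and j in J: the vertices of the
enhanced conflict graph.\<close>

definition subflows :: "('i \<times> 'o set) set \<Rightarrow> ('i \<times> 'o set \<times> 'o) set" where
  "subflows T = {(i, J, j). (i, J) \<in> T \<and> j \<in> J}"

definition ecg_adj :: "('i \<times> 'o set \<times> 'o) \<Rightarrow> ('i \<times> 'o set \<times> 'o) \<Rightarrow> bool" where
  "ecg_adj s t \<longleftrightarrow> s \<noteq> t \<and>
     (case s of (i, J, j) \<Rightarrow> case t of (i', J', j') \<Rightarrow>
        j = j' \<or> (i = i' \<and> J \<noteq> J'))"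

text \<open>The Groetzsch graph = Mycielskian of the 5-cycle, on vertices 0..10:
0..4 the cycle u_k, 5..9 the shadow vertices w_k (w_k adjacent to the cycle-neighbours
of u_k), and 10 the apex z adjacent to all w_k.\<close>

definition groetzsch_edge :: "nat \<Rightarrow> nat \<Rightarrow> bool" where
  "groetzsch_edge a b \<longleftrightarrow>
     (a < 5 \<and> b < 5 \<and> (b = (a + 1) mod 5 \<or> a = (b + 1) mod 5)) \<or>
     (a < 5 \<and> 5 \<le> b \<and> b < 10 \<and> (a = (b - 5 + 1) mod 5 \<or> b - 5 = (a + 1) mod 5)) \<or>
     (b < 5 \<and> 5 \<le> a \<and> a < 10 \<and> (b = (a - 5 + 1) mod 5 \<or> a - 5 = (b + 1) mod 5)) \<or>
     (a = 10 \<and> 5 \<le> b \<and> b < 10) \<or>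
     (b = 10 \<and> 5 \<le> a \<and> a < 10)"

definition groetzsch_vertices :: "nat set" where
  "groetzsch_vertices = {0..10}"

definition ecg_has_induced_groetzsch :: "('i \<times> 'o set) set \<Rightarrow> bool" where
  "ecg_has_induced_groetzsch T \<longleftrightarrow>
     (\<exists>f. inj_on f groetzsch_vertices \<and> f ` groetzsch_vertices \<subseteq> subflows T \<and>
        (\<forall>a\<in>groetzsch_vertices. \<forall>b\<in>groetzsch_vertices.
           a \<noteq> b \<longrightarrow> (groetzsch_edge a b \<longleftrightarrow> ecg_adj (f a) (f b))))"

end

theory Submission
  imports Defs
begin

text \<open>
  An edge of the enhanced conflict graph joins two subflows with a common output (so every
  output class is a clique) or with a common input and different fanout sets. The apex z of an
  induced Groetzsch graph is adjacent to the five pairwise non-adjacent shadow vertices w_k, so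
  at most one of them shares z's output and the others are joined to z through its input.
  If a cycle vertex u is adjacent to a and c but not to b, where a, b, c are joined to z through
  its input, then u cannot have that input (it would be adjacent to z or to b), so it shares the
  output of both a and c, making them adjacent. Applied to u_0, u_2 and u_3 this puts z's output
  partner into each of {w_4, w_0, w_1}, {w_1, w_2, w_3} and {w_2, w_3, w_4}, which have no
  common element.
\<close>

definition sf_input :: "'i \<times> 'o set \<times> 'o \<Rightarrow> 'i" where
  "sf_input s = fst s"

definition sf_fanout :: "'i \<times> 'o set \<times> 'o \<Rightarrow> 'o set" where
  "sf_fanout s = fst (snd s)"

definition sf_output :: "'i \<times> 'o set \<times> 'o \<Rightarrow> 'o" where
  "sf_output s = snd (snd s)"

lemma ecg_adj_iff:
  "ecg_adj s t \<longleftrightarrow> s \<noteq> t \<and>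
     (sf_output s = sf_output t \<or> (sf_input s = sf_input t \<and> sf_fanout s \<noteq> sf_fanout t))"
  by (cases s; cases t) (simp add: ecg_adj_def sf_input_def sf_fanout_def sf_output_def)

lemma ecg_adj_if_same_output:
  "s \<noteq> t \<Longrightarrow> sf_output s = sf_output t \<Longrightarrow> ecg_adj s t"
  by (simp add: ecg_adj_iff)

lemma ecg_shadow_configuration_shares_output:
  assumes za: "ecg_adj z a" and zb: "ecg_adj z b" and zc: "ecg_adj z c"
    and ua: "ecg_adj u a" and uc: "ecg_adj u c"
    and uz: "\<not> ecg_adj u z" "u \<noteq> z" and ub: "\<not> ecg_adj u b" "u \<noteq> b"
    and ac: "\<not> ecg_adj a c" "a \<noteq> c"
  shows "sf_output a = sf_output z \<or> sf_output b = sf_output z \<or> sf_output c = sf_output z"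
proof (rule ccontr)
  have via_input: "sf_input x = sf_input z \<and> sf_fanout x \<noteq> sf_fanout z"
    if "ecg_adj z x" "sf_output x \<noteq> sf_output z" for x
    using that by (auto simp: ecg_adj_iff)
  assume "\<not> ?thesis"
  then have a: "sf_input a = sf_input z" and c: "sf_input c = sf_input z"
    and b: "sf_input b = sf_input z" "sf_fanout b \<noteq> sf_fanout z"
    using via_input za zb zc by blast+
  have "sf_input u \<noteq> sf_input z"
  proof
    assume same_input: "sf_input u = sf_input z"
    with uz have "sf_fanout u = sf_fanout z" by (simp add: ecg_adj_iff)
    with same_input b ub show False by (simp add: ecg_adj_iff)
  qed
  then have "sf_output u = sf_output a" "sf_output u = sf_output c"
    using ua uc a c by (auto simp: ecg_adj_iff)
  then show False using ac ecg_adj_if_same_output by metis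
qed

lemma groetzsch_shadows_independent:
  "5 \<le> m \<Longrightarrow> m < 10 \<Longrightarrow> 5 \<le> n \<Longrightarrow> n < 10 \<Longrightarrow> \<not> groetzsch_edge m n"
  by (simp add: groetzsch_edge_def)

lemma no_induced_groetzsch_map:
  fixes f :: "nat \<Rightarrow> 'i \<times> 'o set \<times> 'o"
  assumes inj: "inj_on f groetzsch_vertices"
    and induced: "\<forall>a\<in>groetzsch_vertices. \<forall>b\<in>groetzsch_vertices.
       a \<noteq> b \<longrightarrow> (groetzsch_edge a b \<longleftrightarrow> ecg_adj (f a) (f b))"
  shows False
proof -
  have distinct: "f a \<noteq> f b" if "a \<le> 10" "b \<le> 10" "a \<noteq> b" for a b
    using inj that by (auto simp: groetzsch_vertices_def inj_on_def)
  have adj: "ecg_adj (f a) (f b) \<longleftrightarrow> groetzsch_edge a b"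
    if "a \<le> 10" "b \<le> 10" "a \<noteq> b" for a b
    using induced that by (auto simp: groetzsch_vertices_def)
  let ?zout = "sf_output (f 10)"
  have partner_unique: "m = n"
    if "m \<in> {5..9}" "n \<in> {5..9}" "sf_output (f m) = ?zout" "sf_output (f n) = ?zout" for m n
  proof (rule ccontr)
    assume "m \<noteq> n"
    then have "ecg_adj (f m) (f n)"
      using that distinct by (intro ecg_adj_if_same_output) auto
    then show False
      using that \<open>m \<noteq> n\<close> adj[of m n] groetzsch_shadows_independent[of m n] by simp
  qed
  then obtain p where partner: "\<And>m. m \<in> {5..9} \<Longrightarrow> sf_output (f m) = ?zout \<Longrightarrow> m = p"
    by metis
  have window_u0: "sf_output (f 9) = ?zout \<or> sf_output (f 5) = ?zout \<or> sf_output (f 6) = ?zout"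
    by (rule ecg_shadow_configuration_shares_output[where u = "f 0"])
      (simp_all add: adj distinct groetzsch_edge_def)
  have window_u2: "sf_output (f 6) = ?zout \<or> sf_output (f 7) = ?zout \<or> sf_output (f 8) = ?zout"
    by (rule ecg_shadow_configuration_shares_output[where u = "f 2"])
      (simp_all add: adj distinct groetzsch_edge_def)
  have window_u3: "sf_output (f 7) = ?zout \<or> sf_output (f 8) = ?zout \<or> sf_output (f 9) = ?zout"
    by (rule ecg_shadow_configuration_shares_output[where u = "f 3"])
      (simp_all add: adj distinct groetzsch_edge_def)
  have "p \<in> {9, 5, 6}" using window_u0 partner[of 9] partner[of 5] partner[of 6] by auto
  moreover have "p \<in> {6, 7, 8}" using window_u2 partner[of 6] partner[of 7] partner[of 8] by auto
  moreover have "p \<in> {7, 8, 9}" using window_u3 partner[of 7] partner[of 8] partner[of 9] by auto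
  ultimately show False by auto
qed

theorem corollary1:
  fixes T :: "('i \<times> 'o set) set"
  assumes "traffic_pattern T"
  shows "\<not> ecg_has_induced_groetzsch T"
  using no_induced_groetzsch_map unfolding ecg_has_induced_groetzsch_def by blast

end
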